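(* Let $\Gamma\subset\mathbb{R}^2$ be a lattice, let $\Lambda>0$ be a smooth $\Gamma$-periodic function on $\mathbb{R}^2$, let $n\ge3$, and let $F=\sum_{i=0}^n a_i(x,y)p_1^{n-i}p_2^i$ with smooth $\Gamma$-periodic $a_i$ satisfy $\{H,F\}=0$, $H=\frac{p_1^2+p_2^2}{2\Lambda}$. Assume the Kolokoltsov relations hold with constant $c_1=0$ and some constant $c_2$, i.e. $$a_{n-1}=\sum_{j\ge 0,\ 2j\le n-3}(-1)^j a_{n-3-2j},\qquad a_n=c_2+\sum_{j\ge 0,\ 2j\le n-2}(-1)^j a_{n-2-2j}.$$ Define $P,Q,R$ as follows. If $n=2k$: with $S_e=\sum_{j=0}^{k-1}(-1)^j(n-2j)a_{2j}$, $S_o=\sum_{j=0}^{k-2}(-1)^j(n-2-2j)a_{2j+1}$, put $P=S_e\Lambda$, $Q=-S_o\Lambda$, $R=(-S_e+(-1)^k nc_2)\Lambda$. If $n=2k+1$: with $T_e=\sum_{j=0}^{k-1}(-1)^j(n-1-2j)a_{2j}$, $T_o=\sum_{j=0}^{k-1}(-1)^j(n-1-2j)a_{2j+1}$, put $P=T_o\Lambda$, $Q=T_e\Lambda$, $R=(-T_o+(-1)^k nc_2)\Lambda$. Then $$P_x+Q_y=0,\qquad Q_x+R_y=0.$$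
   Context: The Poisson bracket is $\{H,F\}=\sum_{j=1}^2\left(\frac{\partial H}{\partial q^j}\frac{\partial F}{\partial p_j}-\frac{\partial H}{\partial p_j}\frac{\partial F}{\partial q^j}\right)$ with $(q^1,q^2)=(x,y)$; $\{H,F\}=0$ means $F$ is a first integral of the geodesic flow of the metric $\Lambda(dx^2+dy^2)$ on the torus $\mathbb{R}^2/\Gamma$. By a theorem of Kolokoltsov, for any such integral there are constants $c_1,c_2$ with $a_{n-1}=c_1+\sum_{j\ge0,2j\le n-3}(-1)^ja_{n-3-2j}$ and $a_n=c_2+\sum_{j\ge0,2j\le n-2}(-1)^ja_{n-2-2j}$; $c_1=0$ can be arranged by a rotation of the $(x,y)$-plane. *)

theory Defs
  imports "HOL-Analysis.Analysis"
begin

text \<open>Functions on the plane are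
  of type real \<times> real \<Rightarrow> real; functions on the cotangent bundle T*R^2 are
  of type (real \<times> real) \<Rightarrow> (real \<times> real) \<Rightarrow> real, taking (q, p) = ((x,y),(p1,p2)).\<close>

definition dx :: "(real \<times> real \<Rightarrow> real) \<Rightarrow> real \<times> real \<Rightarrow> real" where
  "dx f = (\<lambda>z. deriv (\<lambda>t. f (t, snd z)) (fst z))"

definition dy :: "(real \<times> real \<Rightarrow> real) \<Rightarrow> real \<times> real \<Rightarrow> real" where
  "dy f = (\<lambda>z. deriv (\<lambda>t. f (fst z, t)) (snd z))"

coinductive smooth2 :: "(real \<times> real \<Rightarrow> real) \<Rightarrow> bool" where
  "(\<forall>z. f differentiable (at z)) \<Longrightarrow> smooth2 (dx f) \<Longrightarrow> smooth2 (dy f) \<Longrightarrow> smooth2 f"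

definition is_lattice :: "(real \<times> real) set \<Rightarrow> bool" where
  "is_lattice \<Gamma> \<longleftrightarrow> (\<exists>e1 e2. fst e1 * snd e2 - snd e1 * fst e2 \<noteq> 0 \<and>
      \<Gamma> = {of_int m *\<^sub>R e1 + of_int k *\<^sub>R e2 | m k. True})"

definition periodic :: "(real \<times> real) set \<Rightarrow> (real \<times> real \<Rightarrow> real) \<Rightarrow> bool" where
  "periodic \<Gamma> f \<longleftrightarrow> (\<forall>z. \<forall>\<gamma>\<in>\<Gamma>. f (z + \<gamma>) = f z)"

definition dq1 :: "(real \<times> real \<Rightarrow> real \<times> real \<Rightarrow> real) \<Rightarrow> real \<times> real \<Rightarrow> real \<times> real \<Rightarrow> real" where
  "dq1 G q p = deriv (\<lambda>t. G (t, snd q) p) (fst q)"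
definition dq2 :: "(real \<times> real \<Rightarrow> real \<times> real \<Rightarrow> real) \<Rightarrow> real \<times> real \<Rightarrow> real \<times> real \<Rightarrow> real" where
  "dq2 G q p = deriv (\<lambda>t. G (fst q, t) p) (snd q)"
definition dp1 :: "(real \<times> real \<Rightarrow> real \<times> real \<Rightarrow> real) \<Rightarrow> real \<times> real \<Rightarrow> real \<times> real \<Rightarrow> real" where
  "dp1 G q p = deriv (\<lambda>t. G q (t, snd p)) (fst p)"
definition dp2 :: "(real \<times> real \<Rightarrow> real \<times> real \<Rightarrow> real) \<Rightarrow> real \<times> real \<Rightarrow> real \<times> real \<Rightarrow> real" where
  "dp2 G q p = deriv (\<lambda>t. G q (fst p, t)) (snd p)"

definition poisson :: "(real \<times> real \<Rightarrow> real \<times> real \<Rightarrow> real) \<Rightarrow> (real \<times> real \<Rightarrow> real \<times> real \<Rightarrow> real)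
    \<Rightarrow> real \<times> real \<Rightarrow> real \<times> real \<Rightarrow> real" where
  "poisson H F q p = dq1 H q p * dp1 F q p - dp1 H q p * dq1 F q p
                   + dq2 H q p * dp2 F q p - dp2 H q p * dq2 F q p"

definition funP :: "nat \<Rightarrow> (nat \<Rightarrow> real \<times> real \<Rightarrow> real) \<Rightarrow> real \<Rightarrow> (real \<times> real \<Rightarrow> real) \<Rightarrow> real \<times> real \<Rightarrow> real" where
  "funP n a c2 \<Lambda> z = (let k = n div 2 in
     if even n then (\<Sum>j=0..k-1. (-1)^j * (real n - 2 * real j) * a (2*j) z) * \<Lambda> z
     else (\<Sum>j=0..k-1. (-1)^j * (real n - 1 - 2 * real j) * a (2*j+1) z) * \<Lambda> z)"

definition funQ :: "nat \<Rightarrow> (nat \<Rightarrow> real \<times> real \<Rightarrow> real) \<Rightarrow> real \<Rightarrow> (real \<times> real \<Rightarrow> real) \<Rightarrow> real \<times> real \<Rightarrow> real" where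
  "funQ n a c2 \<Lambda> z = (let k = n div 2 in
     if even n then - (\<Sum>j=0..k-2. (-1)^j * (real n - 2 - 2 * real j) * a (2*j+1) z) * \<Lambda> z
     else (\<Sum>j=0..k-1. (-1)^j * (real n - 1 - 2 * real j) * a (2*j) z) * \<Lambda> z)"

definition funR :: "nat \<Rightarrow> (nat \<Rightarrow> real \<times> real \<Rightarrow> real) \<Rightarrow> real \<Rightarrow> (real \<times> real \<Rightarrow> real) \<Rightarrow> real \<times> real \<Rightarrow> real" where
  "funR n a c2 \<Lambda> z = (let k = n div 2 in
     if even n then (- (\<Sum>j=0..k-1. (-1)^j * (real n - 2 * real j) * a (2*j) z) + (-1)^k * real n * c2) * \<Lambda> z
     else (- (\<Sum>j=0..k-1. (-1)^j * (real n - 1 - 2 * real j) * a (2*j+1) z) + (-1)^k * real n * c2) * \<Lambda> z)"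

end

theory Submission
  imports Defs "HOL-Computational_Algebra.Polynomial"
begin

text \<open>Restricting \<open>{H,F} = 0\<close> to momenta \<open>p = (1,t)\<close> gives a polynomial identity in \<open>t\<close> in which
  the derivatives of \<open>\<Lambda>\<close> carry the factor \<open>1 + t^2\<close>; differentiating it at \<open>t = \<i>\<close> yields one
  complex relation between \<open>F\<^sub>p\<^sub>1, F\<^sub>p\<^sub>2, F\<^sub>x, F\<^sub>y\<close> at \<open>p = (1,\<i>)\<close>. Kolokoltsov's relations say exactly that
  \<open>F(1,\<i>) = \<i>^n c\<^sub>2\<close>, so \<open>F\<^sub>x(1,\<i>) = F\<^sub>y(1,\<i>) = 0\<close>, and Euler's identity
  \<open>\<i> F\<^sub>p\<^sub>2 = n F - F\<^sub>p\<^sub>1\<close> eliminates \<open>F\<^sub>p\<^sub>2\<close>. Up to the unit \<open>\<i> ^ (n mod 2)\<close>, \<open>\<Lambda> F\<^sub>p\<^sub>1(1,\<i>)\<close> is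
  \<open>P - \<i> Q\<close>, and the relation becomes \<open>(\<partial>\<^sub>x + \<i> \<partial>\<^sub>y)(P - \<i> Q) = \<i> (-1)^k n c\<^sub>2 \<Lambda>\<^sub>y\<close>, whose real
  and imaginary parts are the two claimed identities.\<close>

lemma smooth2_differentiable: "smooth2 f \<Longrightarrow> f differentiable (at z)"
  by (erule smooth2.cases) (cases z, auto)

lemma has_real_derivative_dx:
  assumes "\<And>z. f differentiable (at z)"
  shows "((\<lambda>t. f (t, y)) has_real_derivative dx f (x, y)) (at x)"
proof -
  have "(\<lambda>t. f (t, y)) differentiable (at x)"
    using differentiable_chain_at[of "\<lambda>t. (t, y)" x f] assms
    by (auto simp: o_def intro!: derivative_intros)
  then show ?thesis
    by (simp add: dx_def DERIV_deriv_iff_real_differentiable)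
qed

lemma has_real_derivative_dy:
  assumes "\<And>z. f differentiable (at z)"
  shows "((\<lambda>t. f (x, t)) has_real_derivative dy f (x, y)) (at y)"
proof -
  have "(\<lambda>t. f (x, t)) differentiable (at y)"
    using differentiable_chain_at[of "\<lambda>t. (x, t)" y f] assms
    by (auto simp: o_def intro!: derivative_intros)
  then show ?thesis
    by (simp add: dy_def DERIV_deriv_iff_real_differentiable)
qed

lemma dx_eqI: "((\<lambda>t. f (t, y)) has_real_derivative D) (at x) \<Longrightarrow> dx f (x, y) = D"
  by (simp add: dx_def DERIV_imp_deriv)

lemma dy_eqI: "((\<lambda>t. f (x, t)) has_real_derivative D) (at y) \<Longrightarrow> dy f (x, y) = D"
  by (simp add: dy_def DERIV_imp_deriv)

lemma poisson_geodesic_at_1_t: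
  fixes \<Lambda> :: "real \<times> real \<Rightarrow> real" and a :: "nat \<Rightarrow> real \<times> real \<Rightarrow> real"
  assumes L0: "\<Lambda> (x, y) \<noteq> 0"
    and DL: "\<And>z. \<Lambda> differentiable (at z)"
    and Da: "\<And>m z. m \<le> n \<Longrightarrow> a m differentiable (at z)"
  shows "- 2 * \<Lambda> (x, y)^2 * poisson (\<lambda>q p. (fst p ^ 2 + snd p ^ 2) / (2 * \<Lambda> q))
                                   (\<lambda>q p. \<Sum>m=0..n. a m q * fst p ^ (n - m) * snd p ^ m) (x, y) (1, t)
    = (1 + t^2) * (dx \<Lambda> (x, y) * (\<Sum>m\<le>n. real (n - m) * a m (x, y) * t^m)
                   + dy \<Lambda> (x, y) * (\<Sum>m\<le>n. real m * a m (x, y) * t^(m - 1)))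
      + 2 * \<Lambda> (x, y) * ((\<Sum>m\<le>n. dx (a m) (x, y) * t^m) + t * (\<Sum>m\<le>n. dy (a m) (x, y) * t^m))"
proof -
  define H where "H = (\<lambda>q p. (fst p ^ 2 + snd p ^ 2) / (2 * \<Lambda> q :: real))"
  define F where "F = (\<lambda>q p. \<Sum>m=0..n. a m q * fst p ^ (n - m) * snd p ^ m :: real)"
  have Hq1: "dq1 H (x, y) (1, t) = - (1 + t^2) * dx \<Lambda> (x, y) / (2 * \<Lambda> (x, y)^2)"
    unfolding dq1_def H_def fst_conv snd_conv
    by (rule DERIV_imp_deriv)
       (use has_real_derivative_dx[OF DL] L0 in
         \<open>auto intro!: derivative_eq_intros simp: field_simps power2_eq_square\<close>)
  have Hq2: "dq2 H (x, y) (1, t) = - (1 + t^2) * dy \<Lambda> (x, y) / (2 * \<Lambda> (x, y)^2)"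
    unfolding dq2_def H_def fst_conv snd_conv
    by (rule DERIV_imp_deriv)
       (use has_real_derivative_dy[OF DL] L0 in
         \<open>auto intro!: derivative_eq_intros simp: field_simps power2_eq_square\<close>)
  have Hp1: "dp1 H (x, y) (1, t) = 1 / \<Lambda> (x, y)"
    unfolding dp1_def H_def fst_conv snd_conv
    by (rule DERIV_imp_deriv) (use L0 in \<open>auto intro!: derivative_eq_intros simp: field_simps\<close>)
  have Hp2: "dp2 H (x, y) (1, t) = t / \<Lambda> (x, y)"
    unfolding dp2_def H_def fst_conv snd_conv
    by (rule DERIV_imp_deriv) (use L0 in \<open>auto intro!: derivative_eq_intros simp: field_simps\<close>)
  have Fq1: "dq1 F (x, y) (1, t) = (\<Sum>m\<le>n. dx (a m) (x, y) * t^m)"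
    and Fq2: "dq2 F (x, y) (1, t) = (\<Sum>m\<le>n. dy (a m) (x, y) * t^m)"
    unfolding dq1_def dq2_def F_def fst_conv snd_conv atLeast0AtMost
    by (auto intro!: DERIV_imp_deriv DERIV_sum derivative_eq_intros
        has_real_derivative_dx has_real_derivative_dy Da)
  have Fp1: "dp1 F (x, y) (1, t) = (\<Sum>m\<le>n. real (n - m) * a m (x, y) * t^m)"
    and Fp2: "dp2 F (x, y) (1, t) = (\<Sum>m\<le>n. real m * a m (x, y) * t^(m - 1))"
    unfolding dp1_def dp2_def F_def fst_conv snd_conv atLeast0AtMost
    by (auto intro!: DERIV_imp_deriv DERIV_sum derivative_eq_intros)
  show ?thesis
    unfolding H_def[symmetric] F_def[symmetric] poisson_def Hq1 Hq2 Hp1 Hp2 Fq1 Fq2 Fp1 Fp2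
    using L0 by (simp add: field_simps power2_eq_square)
qed

definition alt_sum :: "(nat \<Rightarrow> real) \<Rightarrow> nat \<Rightarrow> real" where
  "alt_sum B N = (\<Sum>j\<in>{j. 2 * j \<le> N}. (-1)^j * B (N - 2 * j))"

lemma set_double_le_eq_atMost: "{j. 2 * j \<le> N} = {..N div 2 :: nat}"
  by auto

lemma alt_sum_Suc_Suc: "alt_sum B (Suc (Suc N)) = B (Suc (Suc N)) - alt_sum B N"
proof -
  have "alt_sum B (Suc (Suc N)) = (\<Sum>j\<le>Suc (N div 2). (-1)^j * B (Suc (Suc N) - 2 * j))"
    by (simp add: alt_sum_def set_double_le_eq_atMost)
  also have "\<dots> = B (Suc (Suc N)) - (\<Sum>j\<le>N div 2. (-1)^j * B (N - 2 * j))"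
    by (subst sum.atMost_Suc_shift) (simp add: sum_negf)
  finally show ?thesis
    by (simp add: alt_sum_def set_double_le_eq_atMost)
qed

lemma sum_i_power_alt_sum:
  "(\<Sum>m\<le>Suc N. complex_of_real (B m) * \<i>^m)
     = \<i>^Suc N * complex_of_real (alt_sum B (Suc N)) + \<i>^N * complex_of_real (alt_sum B N)"
proof (induction N)
  case 0
  then show ?case by (simp add: alt_sum_def set_double_le_eq_atMost)
next
  case (Suc N)
  then show ?case
    by (simp add: alt_sum_Suc_Suc algebra_simps)
qed

text \<open>For the form \<open>F = \<Sum>m\<le>n. B m * p\<^sub>1^(n-m) * p\<^sub>2^m\<close> these are \<open>F\<close>, \<open>F\<^sub>p\<^sub>1\<close> and \<open>F\<^sub>p\<^sub>2\<close>
  at \<open>p = (1, \<i>)\<close>.\<close>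

definition hom_val_i :: "nat \<Rightarrow> (nat \<Rightarrow> real) \<Rightarrow> complex" where
  "hom_val_i n B = (\<Sum>m\<le>n. complex_of_real (B m) * \<i>^m)"

definition hom_dp1_i :: "nat \<Rightarrow> (nat \<Rightarrow> real) \<Rightarrow> complex" where
  "hom_dp1_i n B = (\<Sum>m\<le>n. of_nat (n - m) * complex_of_real (B m) * \<i>^m)"

definition hom_dp2_i :: "nat \<Rightarrow> (nat \<Rightarrow> real) \<Rightarrow> complex" where
  "hom_dp2_i n B = (\<Sum>m\<le>n. of_nat m * complex_of_real (B m) * \<i>^(m - 1))"

lemma hom_euler_i: "\<i> * hom_dp2_i n B = of_nat n * hom_val_i n B - hom_dp1_i n B"
proof -
  have "\<i> * hom_dp2_i n B = (\<Sum>m\<le>n. of_nat m * complex_of_real (B m) * \<i>^m)"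
    unfolding hom_dp2_i_def sum_distrib_left
    by (rule sum.cong) (simp_all split: nat_diff_split)
  also have "\<dots> = (\<Sum>m\<le>n. of_nat n * (complex_of_real (B m) * \<i>^m)
                              - of_nat (n - m) * complex_of_real (B m) * \<i>^m)"
  proof (rule sum.cong)
    fix m assume "m \<in> {..n}"
    then have "(of_nat n :: complex) = of_nat (n - m) + of_nat m"
      by (simp flip: of_nat_add)
    then show "of_nat m * complex_of_real (B m) * \<i>^m
        = of_nat n * (complex_of_real (B m) * \<i>^m) - of_nat (n - m) * complex_of_real (B m) * \<i>^m"
      by (simp add: algebra_simps)
  qed simp
  finally show ?thesis
    by (simp add: hom_val_i_def hom_dp1_i_def sum_distrib_left sum_subtractf)
qed

lemma hom_val_i_kolokoltsov:
  assumes "n \<ge> 3"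
    and "B (n - 1) = alt_sum B (n - 3)"
    and "B n = c + alt_sum B (n - 2)"
  shows "hom_val_i n B = \<i>^n * complex_of_real c"
proof -
  define N where "N = n - 3"
  have N: "n = Suc (Suc (Suc N))"
    using assms(1) unfolding N_def by arith
  have "alt_sum B (n - 1) = 0" and "alt_sum B n = c"
    using assms(2,3) by (simp_all add: N alt_sum_Suc_Suc)
  then show ?thesis
    using sum_i_power_alt_sum[of B "Suc (Suc N)"] by (simp add: hom_val_i_def N)
qed

lemma complex_poly_eq_0_if_real_roots:
  fixes p :: "complex poly"
  assumes "\<And>t. poly p (complex_of_real t) = 0"
  shows "p = 0"
proof (rule ccontr)
  assume "p \<noteq> 0"
  moreover have "range complex_of_real \<subseteq> {z. poly p z = 0}"
    using assms by auto
  ultimately have "finite (range complex_of_real)"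
    using poly_roots_finite finite_subset by blast
  then have "finite (UNIV :: real set)"
    using finite_imageD inj_of_real by blast
  then show False
    using infinite_UNIV_char_0 by blast
qed

lemma poly_pderiv_at_i:
  fixes G H :: "complex poly"
  assumes "\<And>t. poly ([:1, 0, 1:] * G + H) (complex_of_real t) = 0"
  shows "poly (pderiv H) \<i> + 2 * \<i> * poly G \<i> = 0"
proof -
  have "[:1, 0, 1:] * G + H = 0"
    using assms by (rule complex_poly_eq_0_if_real_roots)
  then have "poly (pderiv ([:1, 0, 1:] * G + H)) \<i> = 0"
    by simp
  then show ?thesis
    by (simp add: pderiv_add pderiv_mult pderiv_pCons algebra_simps)
qed

lemma pderiv_sum: "pderiv (sum f A) = (\<Sum>x\<in>A. pderiv (f x))"
  using higher_pderiv_sum[of 1 f A] by simp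

definition coeff_poly :: "nat \<Rightarrow> (nat \<Rightarrow> real) \<Rightarrow> complex poly" where
  "coeff_poly n B = (\<Sum>m\<le>n. monom (complex_of_real (B m)) m)"

lemma poly_coeff_poly_of_real:
  "poly (coeff_poly n B) (complex_of_real t) = complex_of_real (\<Sum>m\<le>n. B m * t^m)"
  by (simp add: coeff_poly_def poly_sum poly_monom)

lemma poly_pderiv_coeff_poly_of_real:
  "poly (pderiv (coeff_poly n B)) (complex_of_real t)
     = complex_of_real (\<Sum>m\<le>n. real m * B m * t^(m - 1))"
  by (simp add: coeff_poly_def pderiv_sum pderiv_monom poly_sum poly_monom)

lemma poly_coeff_poly_i: "poly (coeff_poly n B) \<i> = hom_val_i n B"
  by (simp add: coeff_poly_def hom_val_i_def poly_sum poly_monom)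

lemma poly_pderiv_coeff_poly_i: "poly (pderiv (coeff_poly n B)) \<i> = hom_dp2_i n B"
  by (simp add: coeff_poly_def hom_dp2_i_def pderiv_sum pderiv_monom poly_sum poly_monom)

lemma hom_identity_at_i:
  fixes A X Y :: "nat \<Rightarrow> real" and L Lx Ly :: real
  assumes "\<And>t. (1 + t^2) * (Lx * (\<Sum>m\<le>n. real (n - m) * A m * t^m)
                             + Ly * (\<Sum>m\<le>n. real m * A m * t^(m - 1)))
      + 2 * L * ((\<Sum>m\<le>n. X m * t^m) + t * (\<Sum>m\<le>n. Y m * t^m)) = 0"
  shows "\<i> * (complex_of_real Lx * hom_dp1_i n A + complex_of_real Ly * hom_dp2_i n A)
      + complex_of_real L * (hom_dp2_i n X + hom_val_i n Y + \<i> * hom_dp2_i n Y) = 0"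
proof -
  define G where "G = smult (complex_of_real Lx) (coeff_poly n (\<lambda>m. real (n - m) * A m))
    + smult (complex_of_real Ly) (pderiv (coeff_poly n A))"
  define H where "H = smult (complex_of_real (2 * L)) (coeff_poly n X + [:0, 1:] * coeff_poly n Y)"
  have "poly ([:1, 0, 1:] * G + H) (complex_of_real t) = 0" for t
    using arg_cong[OF assms[of t], of complex_of_real]
    by (simp add: G_def H_def poly_coeff_poly_of_real poly_pderiv_coeff_poly_of_real
        power2_eq_square algebra_simps)
  then have "poly (pderiv H) \<i> + 2 * \<i> * poly G \<i> = 0"
    by (rule poly_pderiv_at_i)
  moreover have "poly (coeff_poly n (\<lambda>m. real (n - m) * A m)) \<i> = hom_dp1_i n A"
    by (simp add: poly_coeff_poly_i hom_val_i_def hom_dp1_i_def mult.assoc)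
  ultimately have "2 * (\<i> * (complex_of_real Lx * hom_dp1_i n A + complex_of_real Ly * hom_dp2_i n A)
      + complex_of_real L * (hom_dp2_i n X + hom_val_i n Y + \<i> * hom_dp2_i n Y)) = 0"
    by (simp add: G_def H_def pderiv_add pderiv_smult pderiv_mult pderiv_pCons
        poly_coeff_poly_i poly_pderiv_coeff_poly_i algebra_simps)
  then show ?thesis
    by (simp only: mult_eq_0_iff) simp
qed

definition formP :: "nat \<Rightarrow> (nat \<Rightarrow> real) \<Rightarrow> real" where
  "formP n B = (let k = n div 2 in
     if even n then (\<Sum>j=0..k-1. (-1)^j * (real n - 2 * real j) * B (2*j))
     else (\<Sum>j=0..k-1. (-1)^j * (real n - 1 - 2 * real j) * B (2*j+1)))"

definition formQ :: "nat \<Rightarrow> (nat \<Rightarrow> real) \<Rightarrow> real" where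
  "formQ n B = (let k = n div 2 in
     if even n then - (\<Sum>j=0..k-2. (-1)^j * (real n - 2 - 2 * real j) * B (2*j+1))
     else (\<Sum>j=0..k-1. (-1)^j * (real n - 1 - 2 * real j) * B (2*j)))"

lemma funP_eq: "funP n a c2 \<Lambda> z = formP n (\<lambda>i. a i z) * \<Lambda> z"
  by (simp add: funP_def formP_def Let_def)

lemma funQ_eq: "funQ n a c2 \<Lambda> z = formQ n (\<lambda>i. a i z) * \<Lambda> z"
  by (simp add: funQ_def formQ_def Let_def)

lemma funR_eq:
  "funR n a c2 \<Lambda> z = (- formP n (\<lambda>i. a i z) + (-1)^(n div 2) * real n * c2) * \<Lambda> z"
  by (simp add: funR_def formP_def Let_def)

lemma i_power_even: "\<i> ^ (2 * j) = (-1) ^ j"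
  by (simp add: power_mult)

lemma sum_i_power_even_odd:
  "(\<Sum>m<2*M. complex_of_real (c m) * \<i>^m)
     = complex_of_real (\<Sum>j<M. (-1)^j * c (2*j)) + \<i> * complex_of_real (\<Sum>j<M. (-1)^j * c (2*j+1))"
proof (induction M)
  case (Suc M)
  have "(\<Sum>m<2 * Suc M. complex_of_real (c m) * \<i>^m)
      = (\<Sum>m<2*M. complex_of_real (c m) * \<i>^m)
        + complex_of_real (c (2*M)) * \<i>^(2*M) + complex_of_real (c (2*M+1)) * \<i>^(2*M+1)"
    by simp
  then show ?case
    using Suc.IH by (simp only: power_add i_power_even) (simp add: algebra_simps)
qed simp

lemma sum_lessThan_Suc_last_0: "f k = 0 \<Longrightarrow> (\<Sum>j<Suc k. f j) = (\<Sum>j<k. f j)"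
  by simp

lemma hom_dp1_i_even:
  assumes n: "n = 2*k" and k: "k \<ge> 2" and real_val: "Im (hom_val_i n B) = 0"
  shows "hom_dp1_i n B = complex_of_real (formP n B) - \<i> * complex_of_real (formQ n B)"
proof -
  have "{..n} = insert (2*k) {..<2*k}" using n by auto
  then have dp1: "hom_dp1_i n B = (\<Sum>m<2*k. complex_of_real (real (n - m) * B m) * \<i>^m)"
    and val: "hom_val_i n B = (\<Sum>m<2*k. complex_of_real (B m) * \<i>^m) + complex_of_real (B (2*k)) * \<i>^(2*k)"
    by (simp_all add: hom_dp1_i_def hom_val_i_def n)
  have odd_part: "(\<Sum>j<k. (-1)^j * B (2*j+1)) = 0"
    using real_val by (simp add: val sum_i_power_even_odd i_power_even)
  have "(\<Sum>j<k. (-1)^j * real (n - (2*j+1)) * B (2*j+1))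
      = (\<Sum>j<k. (-1)^j * (real n - 2 - 2 * real j) * B (2*j+1)) + (\<Sum>j<k. (-1)^j * B (2*j+1))"
    unfolding sum.distrib[symmetric] by (rule sum.cong) (auto simp: n algebra_simps)
  also have "(\<Sum>j<k. (-1)^j * (real n - 2 - 2 * real j) * B (2*j+1))
      = (\<Sum>j=0..k-2. (-1)^j * (real n - 2 - 2 * real j) * B (2*j+1))"
  proof -
    have "k = Suc (k - 1)" and "{..<k - 1} = {0..k - 2}" using k by auto
    then show ?thesis
      using sum_lessThan_Suc_last_0[of "\<lambda>j. (-1)^j * (real n - 2 - 2 * real j) * B (2*j+1)" "k - 1"]
      using k by (simp add: n)
  qed
  finally have "(\<Sum>j<k. (-1)^j * (real (n - (2*j+1)) * B (2*j+1))) = - formQ n B"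
    using odd_part by (simp add: formQ_def n mult.assoc)
  moreover have "(\<Sum>j<k. (-1)^j * (real (n - 2*j) * B (2*j))) = formP n B"
  proof -
    have "{0..k - 1} = {..<k}" using k by auto
    then show ?thesis by (simp add: formP_def n mult.assoc)
  qed
  ultimately show ?thesis
    unfolding dp1 sum_i_power_even_odd by simp
qed

lemma hom_dp1_i_odd:
  assumes n: "n = 2*k+1" and k: "k \<ge> 1" and imag_val: "Re (hom_val_i n B) = 0"
  shows "hom_dp1_i n B = \<i> * (complex_of_real (formP n B) - \<i> * complex_of_real (formQ n B))"
proof -
  have range: "{..n} = {..<2 * Suc k}" and "{0..k - 1} = {..<k}" using n k by auto
  have dp1: "hom_dp1_i n B = (\<Sum>m<2 * Suc k. complex_of_real (real (n - m) * B m) * \<i>^m)"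
    by (simp add: hom_dp1_i_def range)
  have "hom_val_i n B = complex_of_real (\<Sum>j<Suc k. (-1)^j * B (2*j))
      + \<i> * complex_of_real (\<Sum>j<Suc k. (-1)^j * B (2*j+1))"
    unfolding hom_val_i_def range by (rule sum_i_power_even_odd)
  then have even_part: "(\<Sum>j<Suc k. (-1)^j * B (2*j)) = 0"
    using imag_val by (simp del: sum.lessThan_Suc)
  have "(\<Sum>j<Suc k. (-1)^j * (real (n - 2*j) * B (2*j)))
      = (\<Sum>j<Suc k. (-1)^j * (real n - 1 - 2 * real j) * B (2*j)) + (\<Sum>j<Suc k. (-1)^j * B (2*j))"
    unfolding sum.distrib[symmetric] by (rule sum.cong) (auto simp: n algebra_simps)
  also have "(\<Sum>j<Suc k. (-1)^j * (real n - 1 - 2 * real j) * B (2*j)) = formQ n B"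
    using \<open>{0..k - 1} = {..<k}\<close> by (simp add: formQ_def n)
  finally have re: "(\<Sum>j<Suc k. (-1)^j * (real (n - 2*j) * B (2*j))) = formQ n B"
    using even_part by simp
  have "(\<Sum>j<Suc k. (-1)^j * (real (n - (2*j+1)) * B (2*j+1)))
      = (\<Sum>j<k. (-1)^j * (real n - 1 - 2 * real j) * B (2*j+1))"
    by (rule trans[OF sum_lessThan_Suc_last_0]) (auto simp: n intro!: sum.cong)
  then have im: "(\<Sum>j<Suc k. (-1)^j * (real (n - (2*j+1)) * B (2*j+1))) = formP n B"
    using \<open>{0..k - 1} = {..<k}\<close> by (simp add: formP_def n)
  show ?thesis
    unfolding dp1 sum_i_power_even_odd re im by (simp add: algebra_simps)
qed

lemma i_power_parity: "\<i> ^ n = \<i> ^ (n mod 2) * (-1) ^ (n div 2)"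
  by (metis i_power_even mult.commute power_add div_mult_mod_eq)

lemma hom_dp1_i_eq_forms:
  assumes "n \<ge> 3" and "hom_val_i n B = \<i> ^ n * complex_of_real c"
  shows "hom_dp1_i n B = \<i> ^ (n mod 2) * (complex_of_real (formP n B) - \<i> * complex_of_real (formQ n B))"
proof (cases "even n")
  case True
  then obtain k where "n = 2*k" by blast
  with assms show ?thesis
    by (simp add: hom_dp1_i_even i_power_even)
next
  case False
  then obtain k where "n = 2*k+1" using oddE by blast
  with assms show ?thesis
    by (simp add: hom_dp1_i_odd power_add i_power_even)
qed

lemma conservation_at_point:
  fixes A X Y :: "nat \<Rightarrow> real" and L Lx Ly c2 :: real
  assumes n: "n \<ge> 3"
    and identity: "\<i> * (complex_of_real Lx * hom_dp1_i n A + complex_of_real Ly * hom_dp2_i n A)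
      + complex_of_real L * (hom_dp2_i n X + hom_val_i n Y + \<i> * hom_dp2_i n Y) = 0"
    and val_A: "hom_val_i n A = \<i> ^ n * complex_of_real c2"
    and val_X: "hom_val_i n X = 0" and val_Y: "hom_val_i n Y = 0"
  shows "formP n X * L + formP n A * Lx + (formQ n Y * L + formQ n A * Ly) = 0"
    and "formQ n X * L + formQ n A * Lx
         + (- formP n Y * L + (- formP n A + (-1)^(n div 2) * real n * c2) * Ly) = 0"
proof -
  define \<epsilon> :: complex where "\<epsilon> = \<i> ^ (n mod 2)"
  define \<zeta> where "\<zeta> B = complex_of_real (formP n B) - \<i> * complex_of_real (formQ n B)" for B
  have dp2: "hom_dp2_i n B = - \<i> * (of_nat n * hom_val_i n B - hom_dp1_i n B)" for B
    using arg_cong[OF hom_euler_i[of n B], of "\<lambda>z. - \<i> * z"] by simp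
  have dp1: "hom_dp1_i n B = \<epsilon> * \<zeta> B" if "hom_val_i n B = \<i> ^ n * complex_of_real c" for B c
    using hom_dp1_i_eq_forms[OF n that] by (simp add: \<epsilon>_def \<zeta>_def)
  have dp1_A: "hom_dp1_i n A = \<epsilon> * \<zeta> A" and dp1_X: "hom_dp1_i n X = \<epsilon> * \<zeta> X"
    and dp1_Y: "hom_dp1_i n Y = \<epsilon> * \<zeta> Y"
    using dp1[OF val_A] dp1[of X 0] dp1[of Y 0] val_X val_Y by simp_all
  have "\<epsilon> * (complex_of_real Lx * \<zeta> A + \<i> * complex_of_real Ly * \<zeta> A
         + complex_of_real L * \<zeta> X + \<i> * complex_of_real L * \<zeta> Y
         - \<i> * of_nat n * complex_of_real ((-1)^(n div 2) * c2 * Ly))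
      = - \<i> * (\<i> * (complex_of_real Lx * hom_dp1_i n A + complex_of_real Ly * hom_dp2_i n A)
         + complex_of_real L * (hom_dp2_i n X + hom_val_i n Y + \<i> * hom_dp2_i n Y))"
    unfolding dp2 dp1_A dp1_X dp1_Y val_A val_X val_Y \<epsilon>_def
    by (subst i_power_parity) (simp add: algebra_simps)
  also have "\<dots> = 0"
    using identity by simp
  finally have "complex_of_real Lx * \<zeta> A + \<i> * complex_of_real Ly * \<zeta> A
         + complex_of_real L * \<zeta> X + \<i> * complex_of_real L * \<zeta> Y
         - \<i> * of_nat n * complex_of_real ((-1)^(n div 2) * c2 * Ly) = 0"
    by (simp add: \<epsilon>_def)
  from arg_cong[OF this, of Re] arg_cong[OF this, of Im]
  show "formP n X * L + formP n A * Lx + (formQ n Y * L + formQ n A * Ly) = 0"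
    and "formQ n X * L + formQ n A * Lx
         + (- formP n Y * L + (- formP n A + (-1)^(n div 2) * real n * c2) * Ly) = 0"
    by (simp_all add: \<zeta>_def algebra_simps)
qed

lemma has_real_derivative_alt_sum:
  assumes "\<And>i. i \<le> N \<Longrightarrow> (g i has_real_derivative g' i) (at t)"
  shows "((\<lambda>t. alt_sum (\<lambda>i. g i t) N) has_real_derivative alt_sum g' N) (at t)"
  unfolding alt_sum_def by (auto intro!: DERIV_sum DERIV_cmult assms)

lemma has_real_derivative_formP:
  assumes "\<And>i. i \<le> n \<Longrightarrow> (g i has_real_derivative g' i) (at t)"
  shows "((\<lambda>t. formP n (\<lambda>i. g i t)) has_real_derivative formP n g') (at t)"
  unfolding formP_def Let_def
  by (cases "even n") (auto intro!: DERIV_sum DERIV_cmult assms elim!: evenE oddE)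

lemma has_real_derivative_formQ:
  assumes "n \<ge> 1" and "\<And>i. i \<le> n \<Longrightarrow> (g i has_real_derivative g' i) (at t)"
  shows "((\<lambda>t. formQ n (\<lambda>i. g i t)) has_real_derivative formQ n g') (at t)"
  unfolding formQ_def Let_def
  using assms(1)
  by (cases "even n") (auto intro!: DERIV_sum DERIV_cmult DERIV_minus assms(2) elim!: evenE oddE)

lemma partials_alt_sum_relation:
  assumes Da: "\<And>i z. i \<le> N \<Longrightarrow> a i differentiable (at z)"
    and f: "\<And>z. f z = c + alt_sum (\<lambda>i. a i z) N"
  shows "dx f (x, y) = alt_sum (\<lambda>i. dx (a i) (x, y)) N"
    and "dy f (x, y) = alt_sum (\<lambda>i. dy (a i) (x, y)) N"
  unfolding f
  by (auto intro!: dx_eqI dy_eqI DERIV_add_const has_real_derivative_alt_sum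
      has_real_derivative_dx has_real_derivative_dy Da)

lemma partials_funPQR:
  assumes n: "n \<ge> 1"
    and DL: "\<And>z. \<Lambda> differentiable (at z)"
    and Da: "\<And>i z. i \<le> n \<Longrightarrow> a i differentiable (at z)"
  shows "dx (funP n a c2 \<Lambda>) (x, y)
           = formP n (\<lambda>i. dx (a i) (x, y)) * \<Lambda> (x, y) + formP n (\<lambda>i. a i (x, y)) * dx \<Lambda> (x, y)"
    and "dx (funQ n a c2 \<Lambda>) (x, y)
           = formQ n (\<lambda>i. dx (a i) (x, y)) * \<Lambda> (x, y) + formQ n (\<lambda>i. a i (x, y)) * dx \<Lambda> (x, y)"
    and "dy (funQ n a c2 \<Lambda>) (x, y)
           = formQ n (\<lambda>i. dy (a i) (x, y)) * \<Lambda> (x, y) + formQ n (\<lambda>i. a i (x, y)) * dy \<Lambda> (x, y)"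
    and "dy (funR n a c2 \<Lambda>) (x, y)
           = - formP n (\<lambda>i. dy (a i) (x, y)) * \<Lambda> (x, y)
             + (- formP n (\<lambda>i. a i (x, y)) + (-1)^(n div 2) * real n * c2) * dy \<Lambda> (x, y)"
  unfolding funP_eq[abs_def] funQ_eq[abs_def] funR_eq[abs_def]
  by (auto intro!: dx_eqI dy_eqI derivative_eq_intros
      has_real_derivative_formP has_real_derivative_formQ[OF n]
      has_real_derivative_dx has_real_derivative_dy Da DL)

theorem theorem2:
  fixes \<Gamma> :: "(real \<times> real) set" and \<Lambda> :: "real \<times> real \<Rightarrow> real"
    and a :: "nat \<Rightarrow> real \<times> real \<Rightarrow> real" and n :: nat and c2 :: real
  assumes lat: "is_lattice \<Gamma>"
    and Lpos: "\<And>z. \<Lambda> z > 0" and Lsmooth: "smooth2 \<Lambda>" and Lper: "periodic \<Gamma> \<Lambda>"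
    and n3: "n \<ge> 3"
    and asmooth: "\<And>i. i \<le> n \<Longrightarrow> smooth2 (a i)"
    and aper: "\<And>i. i \<le> n \<Longrightarrow> periodic \<Gamma> (a i)"
    and integral: "\<And>q p. poisson (\<lambda>q p. (fst p ^ 2 + snd p ^ 2) / (2 * \<Lambda> q))
                         (\<lambda>q p. \<Sum>i=0..n. a i q * fst p ^ (n - i) * snd p ^ i) q p = 0"
    and kol1: "\<And>z. a (n - 1) z = (\<Sum>j\<in>{j. 2 * j \<le> n - 3}. (-1)^j * a (n - 3 - 2 * j) z)"
    and kol2: "\<And>z. a n z = c2 + (\<Sum>j\<in>{j. 2 * j \<le> n - 2}. (-1)^j * a (n - 2 - 2 * j) z)"
  shows "\<forall>z. dx (funP n a c2 \<Lambda>) z + dy (funQ n a c2 \<Lambda>) z = 0 \<and>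
             dx (funQ n a c2 \<Lambda>) z + dy (funR n a c2 \<Lambda>) z = 0"
proof
  fix z :: "real \<times> real"
  obtain x y where z: "z = (x, y)" by (cases z)
  have DL: "\<And>z. \<Lambda> differentiable (at z)" and Da: "\<And>i z. i \<le> n \<Longrightarrow> a i differentiable (at z)"
    using Lsmooth asmooth by (simp_all add: smooth2_differentiable)
  have kol1': "\<And>z. a (n - 1) z = 0 + alt_sum (\<lambda>i. a i z) (n - 3)"
    and kol2': "\<And>z. a n z = c2 + alt_sum (\<lambda>i. a i z) (n - 2)"
    using kol1 kol2 by (simp_all add: alt_sum_def)
  define A where "A = (\<lambda>i. a i (x, y))"
  define X where "X = (\<lambda>i. dx (a i) (x, y))"
  define Y where "Y = (\<lambda>i. dy (a i) (x, y))"
  have val_A: "hom_val_i n A = \<i> ^ n * complex_of_real c2"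
    unfolding A_def using n3 kol1' kol2' by (simp add: hom_val_i_kolokoltsov)
  have val_X: "hom_val_i n X = 0" and val_Y: "hom_val_i n Y = 0"
    unfolding X_def Y_def
    using n3 partials_alt_sum_relation[OF _ kol1'] partials_alt_sum_relation[OF _ kol2'] Da
    by (simp_all add: hom_val_i_kolokoltsov)
  have "(1 + t^2) * (dx \<Lambda> (x, y) * (\<Sum>m\<le>n. real (n - m) * A m * t^m)
                                + dy \<Lambda> (x, y) * (\<Sum>m\<le>n. real m * A m * t^(m - 1)))
      + 2 * \<Lambda> (x, y) * ((\<Sum>m\<le>n. X m * t^m) + t * (\<Sum>m\<le>n. Y m * t^m)) = 0" for t
    using poisson_geodesic_at_1_t[of \<Lambda> x y n a t] Lpos[of "(x, y)"] DL Da integral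
    by (simp add: A_def X_def Y_def)
  note conservation = conservation_at_point[OF n3 hom_identity_at_i[OF this] val_A val_X val_Y]
  show "dx (funP n a c2 \<Lambda>) z + dy (funQ n a c2 \<Lambda>) z = 0 \<and>
        dx (funQ n a c2 \<Lambda>) z + dy (funR n a c2 \<Lambda>) z = 0"
    using conservation n3 unfolding z
    by (simp add: partials_funPQR[OF _ DL] Da A_def X_def Y_def algebra_simps)
qed

end
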